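(* Let $n$ be a positive integer. Then, as $m\to\infty$ through the positive integers, \[ \sum_{k = 1}^{m} (-1)^{k-1} \binom{m}{k} \frac{1}{k^{n}} = \frac{\log^{n}{m}}{n!} + \frac{\gamma\log^{n-1}{m}}{(n-1)!} + O(\log^{n-2}{m}). \]
   Context: $\gamma$ is the Euler--Mascheroni constant. *)

theory Defs
  imports "HOL-Analysis.Analysis" "HOL-Library.Landau_Symbols"
begin

end

theory Submission
  imports Defs
begin

text \<open>Absorbing one factor \<open>1 / k\<close> into the binomial coefficient gives the Pascal-type
  recursion \<open>A (n+1) (m+1) = A (n+1) m + A n (m+1) / (m+1)\<close> for the alternating sum \<open>A\<close>,
  with \<open>A 0 m = 1\<close> and hence \<open>A 1 m = harm m\<close>. The powers \<open>harm m ^ n / n!\<close> obey the same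
  recursion up to the second-order defect of the tangent approximation of \<open>x ^ (n+1)\<close>, which is
  \<open>O(harm m ^ (n-1) / m\<^sup>2)\<close>. Since \<open>\<Sum> 1 / j\<^sup>2\<close> converges, induction on \<open>n\<close> gives
  \<open>A n m = harm m ^ n / n! + O(harm m ^ (n-2))\<close>. Substituting \<open>harm m = ln m + \<gamma> + O(1 / m)\<close>
  and expanding \<open>(ln m + \<gamma>) ^ n\<close> to first order yields the expansion.\<close>

definition alt_binom_sum :: "nat \<Rightarrow> nat \<Rightarrow> real" where
  "alt_binom_sum n m = (\<Sum>k=1..m. (-1) ^ (k - 1) * real (m choose k) / real k ^ n)"

lemma alt_binom_sum_conv_lessThan:
  "alt_binom_sum n m = (\<Sum>i<m. (-1) ^ i * real (m choose Suc i) / real (Suc i) ^ n)"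
  unfolding alt_binom_sum_def by (simp add: sum.atLeast1_atMost_eq)

lemma alt_binom_sum_0:
  assumes "m \<ge> 1"
  shows "alt_binom_sum 0 m = 1"
proof -
  have "0 = (\<Sum>i\<le>m. (-1) ^ i * real (m choose i))"
    using choose_alternating_sum[of m] assms by simp
  also have "\<dots> = 1 - (\<Sum>i<m. (-1) ^ i * real (m choose Suc i))"
    by (subst sum.atMost_shift) (simp add: sum_negf)
  finally show ?thesis
    by (simp add: alt_binom_sum_conv_lessThan)
qed

lemma alt_binom_sum_Suc_Suc:
  "alt_binom_sum (Suc n) (Suc m) = alt_binom_sum (Suc n) m + alt_binom_sum n (Suc m) / real (Suc m)"
proof -
  have absorb: "real (m choose i) / real (Suc i) ^ Suc n
      = real (Suc m choose Suc i) / real (Suc i) ^ n / real (Suc m)" for i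
  proof -
    have "real (Suc i) * real (Suc m choose Suc i) = real (Suc m) * real (m choose i)"
      using Suc_times_binomial[of i m] by (metis of_nat_mult)
    then show ?thesis
      by (simp add: field_simps del: of_nat_Suc binomial_Suc_Suc)
  qed
  have "alt_binom_sum (Suc n) (Suc m)
      = (\<Sum>i<Suc m. (-1) ^ i * real (m choose Suc i) / real (Suc i) ^ Suc n)
      + (\<Sum>i<Suc m. (-1) ^ i * (real (m choose i) / real (Suc i) ^ Suc n))"
    by (simp add: alt_binom_sum_conv_lessThan add_divide_distrib distrib_left sum.distrib
        del: sum.lessThan_Suc)
  also have "(\<Sum>i<Suc m. (-1) ^ i * real (m choose Suc i) / real (Suc i) ^ Suc n)
      = alt_binom_sum (Suc n) m"
    by (simp add: alt_binom_sum_conv_lessThan)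
  also have "(\<Sum>i<Suc m. (-1) ^ i * (real (m choose i) / real (Suc i) ^ Suc n))
      = alt_binom_sum n (Suc m) / real (Suc m)"
    unfolding absorb alt_binom_sum_conv_lessThan
    by (simp add: sum_divide_distrib del: sum.lessThan_Suc of_nat_Suc binomial_Suc_Suc)
  finally show ?thesis .
qed

lemma alt_binom_sum_1: "alt_binom_sum 1 m = harm m"
proof (induction m)
  case 0
  then show ?case by (simp add: alt_binom_sum_def harm_def)
next
  case (Suc m)
  then show ?case
    using alt_binom_sum_Suc_Suc[of 0 m] alt_binom_sum_0[of "Suc m"]
    by (simp add: harm_Suc field_simps)
qed

lemma power_Suc_diff_le:
  fixes a b :: real
  assumes "0 \<le> a" "a \<le> b"
  shows "b ^ Suc n - a ^ Suc n \<le> real (Suc n) * (b - a) * b ^ n"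
proof (induction n)
  case 0
  then show ?case by simp
next
  case (Suc n)
  have "b ^ Suc (Suc n) - a ^ Suc (Suc n) = b * (b ^ Suc n - a ^ Suc n) + a ^ Suc n * (b - a)"
    by (simp add: algebra_simps)
  also have "\<dots> \<le> b * (real (Suc n) * (b - a) * b ^ n) + b ^ Suc n * (b - a)"
    using Suc assms by (intro add_mono mult_left_mono mult_right_mono power_mono) auto
  also have "\<dots> = real (Suc (Suc n)) * (b - a) * b ^ Suc n"
    by (simp add: algebra_simps)
  finally show ?case .
qed

lemma abs_power_diff_le:
  fixes x y M :: real
  assumes "0 \<le> x" "0 \<le> y" "x \<le> M" "y \<le> M"
  shows "\<bar>x ^ n - y ^ n\<bar> \<le> real n * \<bar>x - y\<bar> * M ^ (n - 1)"
proof (cases n)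
  case 0
  then show ?thesis by simp
next
  case (Suc k)
  have "\<bar>x ^ Suc k - y ^ Suc k\<bar> \<le> real (Suc k) * \<bar>x - y\<bar> * max x y ^ k"
    using power_Suc_diff_le[of x y k] power_Suc_diff_le[of y x k] power_mono[of x y "Suc k"]
      power_mono[of y x "Suc k"] assms
    by (cases "x \<le> y") (auto simp: max_def abs_if)
  also have "\<dots> \<le> real (Suc k) * \<bar>x - y\<bar> * M ^ k"
    using assms by (intro mult_left_mono power_mono) auto
  finally show ?thesis
    using Suc by simp
qed

definition power_tangent_defect :: "real \<Rightarrow> real \<Rightarrow> nat \<Rightarrow> real" where
  "power_tangent_defect a b n = real (Suc n) * (b - a) * b ^ n - (b ^ Suc n - a ^ Suc n)"

lemma power_tangent_defect_Suc:
  "power_tangent_defect a b (Suc n)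
     = b * power_tangent_defect a b n + (b - a) * (b ^ Suc n - a ^ Suc n)"
  unfolding power_tangent_defect_def by (simp add: algebra_simps)

lemma power_tangent_defect_nonneg:
  assumes "0 \<le> a" "a \<le> b"
  shows "0 \<le> power_tangent_defect a b n"
proof (induction n)
  case 0
  then show ?case by (simp add: power_tangent_defect_def)
next
  case (Suc n)
  have "a ^ Suc n \<le> b ^ Suc n"
    using assms by (intro power_mono) auto
  then show ?case
    using Suc assms unfolding power_tangent_defect_Suc by simp
qed

lemma power_tangent_defect_le:
  assumes "0 \<le> a" "a \<le> b"
  shows "power_tangent_defect a b n \<le> real (Suc n) ^ 2 * (b - a) ^ 2 * b ^ (n - 1)"
proof -
  have "power_tangent_defect a b (Suc k) \<le> real (Suc (Suc k)) ^ 2 * (b - a) ^ 2 * b ^ k" for k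
  proof (induction k)
    case 0
    have "power_tangent_defect a b 1 = (b - a) ^ 2"
      by (simp add: power_tangent_defect_def power2_eq_square algebra_simps)
    then show ?case
      by simp
  next
    case (Suc k)
    have "power_tangent_defect a b (Suc (Suc k))
        \<le> b * (real (Suc (Suc k)) ^ 2 * (b - a) ^ 2 * b ^ k)
          + (b - a) * (real (Suc (Suc k)) * (b - a) * b ^ Suc k)"
      unfolding power_tangent_defect_Suc[of a b "Suc k"]
      using Suc power_Suc_diff_le[OF assms, of "Suc k"] assms
      by (intro add_mono mult_left_mono) auto
    also have "\<dots> = (real (Suc (Suc k)) ^ 2 + real (Suc (Suc k))) * ((b - a) ^ 2 * b ^ Suc k)"
      by (simp add: algebra_simps power2_eq_square)
    also have "\<dots> \<le> real (Suc (Suc (Suc k))) ^ 2 * ((b - a) ^ 2 * b ^ Suc k)"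
    proof (rule mult_right_mono)
      show "0 \<le> (b - a) ^ 2 * b ^ Suc k"
        using assms by simp
    qed (simp add: power2_eq_square algebra_simps)
    finally show ?case
      by (simp add: mult_ac)
  qed
  then show ?thesis
    by (cases n) (simp_all add: power_tangent_defect_def)
qed

text \<open>The defect at the right end point, combined with the first-order bound, controls the
  second-order Taylor remainder of \<open>x ^ N\<close> at the left end point.\<close>

lemma abs_power_add_minus_linear_le:
  fixes L c :: real
  assumes "0 \<le> L" "0 \<le> c"
  shows "\<bar>(L + c) ^ Suc (Suc k) - L ^ Suc (Suc k) - real (Suc (Suc k)) * c * L ^ Suc k\<bar>
     \<le> 2 * real (Suc (Suc k)) ^ 2 * c ^ 2 * (L + c) ^ k"
proof -
  define N where "N = real (Suc (Suc k))"
  define G where "G = power_tangent_defect L (L + c) (Suc k)"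
  define P where "P = N * c * ((L + c) ^ Suc k - L ^ Suc k)"
  have LLc: "L \<le> L + c"
    using assms by simp
  have "(L + c) ^ Suc (Suc k) - L ^ Suc (Suc k) - N * c * L ^ Suc k = P - G"
    unfolding P_def G_def N_def power_tangent_defect_def by (simp add: algebra_simps)
  moreover have "0 \<le> G" "G \<le> N ^ 2 * c ^ 2 * (L + c) ^ k"
    unfolding G_def N_def
    using power_tangent_defect_nonneg[OF assms(1) LLc] power_tangent_defect_le[OF assms(1) LLc, of "Suc k"]
    by auto
  moreover have "0 \<le> P"
    unfolding P_def N_def using assms power_mono[OF LLc assms(1), of "Suc k"] by simp
  moreover have "P \<le> N * c * (real (Suc k) * c * (L + c) ^ k)"
    unfolding P_def N_def using power_Suc_diff_le[OF assms(1) LLc, of k] assms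
    by (intro mult_left_mono) auto
  moreover have "\<dots> \<le> N ^ 2 * c ^ 2 * (L + c) ^ k"
  proof -
    have "N * real (Suc k) * (c ^ 2 * (L + c) ^ k) \<le> N * N * (c ^ 2 * (L + c) ^ k)"
      unfolding N_def using assms by (intro mult_right_mono) auto
    then show ?thesis
      by (simp add: power2_eq_square mult_ac)
  qed
  ultimately show ?thesis
    unfolding N_def by (simp add: abs_le_iff)
qed

definition alt_binom_remainder :: "nat \<Rightarrow> nat \<Rightarrow> real" where
  "alt_binom_remainder n m = alt_binom_sum n m - harm m ^ n / fact n"

lemma alt_binom_remainder_Suc_Suc:
  "alt_binom_remainder (Suc n) (Suc m)
     = alt_binom_remainder (Suc n) m + alt_binom_remainder n (Suc m) / real (Suc m)
       + power_tangent_defect (harm m) (harm (Suc m)) n / fact (Suc n)"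
proof -
  have step: "harm (Suc m) - harm m = (1::real) / real (Suc m)"
    by (simp add: harm_Suc inverse_eq_divide)
  have "power_tangent_defect (harm m) (harm (Suc m)) n / fact (Suc n)
      = harm (Suc m) ^ n / fact n / real (Suc m)
        - harm (Suc m) ^ Suc n / fact (Suc n) + harm m ^ Suc n / fact (Suc n)"
    unfolding power_tangent_defect_def step
    by (simp add: fact_Suc field_simps del: of_nat_Suc)
  then show ?thesis
    unfolding alt_binom_remainder_def alt_binom_sum_Suc_Suc by (simp add: diff_divide_distrib)
qed

lemma alt_binom_remainder_Suc_eq_sum:
  "alt_binom_remainder (Suc n) m
     = (\<Sum>j=1..m. alt_binom_remainder n j / real j
                  + power_tangent_defect (harm (j - 1)) (harm j) n / fact (Suc n))"
proof (induction m)
  case 0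
  then show ?case by (simp add: alt_binom_remainder_def alt_binom_sum_def harm_def)
next
  case (Suc m)
  then show ?case by (simp add: alt_binom_remainder_Suc_Suc)
qed

lemma alt_binom_remainder_eq_0:
  assumes "n \<le> 1" "m \<ge> 1"
  shows "alt_binom_remainder n m = 0"
  using assms alt_binom_sum_0[of m] alt_binom_sum_1[of m]
  by (auto simp: alt_binom_remainder_def le_Suc_eq)

lemma power_tangent_defect_harm_le:
  assumes "1 \<le> j" "j \<le> m"
  shows "power_tangent_defect (harm (j - 1)) (harm j) n
           \<le> real (Suc n) ^ 2 * harm m ^ (n - 1) / real j ^ 2"
proof -
  have harm_j: "harm j = harm (j - 1) + 1 / real j"
    using assms(1) harm_Suc[of "j - 1"] by (simp add: inverse_eq_divide)
  have "power_tangent_defect (harm (j - 1)) (harm j) n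
      \<le> real (Suc n) ^ 2 * (1 / real j) ^ 2 * harm j ^ (n - 1)"
    using power_tangent_defect_le[of "harm (j - 1)" "harm j" n] harm_j
    by (simp add: harm_nonneg)
  also have "\<dots> \<le> real (Suc n) ^ 2 * (1 / real j) ^ 2 * harm m ^ (n - 1)"
    using assms by (intro mult_left_mono power_mono harm_mono harm_nonneg) auto
  finally show ?thesis
    by (simp add: power_divide)
qed

lemma sum_inverse_squares_le: "(\<Sum>j=1..m. 1 / real j ^ 2) \<le> pi ^ 2 / 6"
proof -
  have "(\<Sum>j=1..m. 1 / real j ^ 2) = (\<Sum>i<m. 1 / real ((i + 1) ^ 2))"
    by (simp add: sum.atLeast1_atMost_eq)
  also have "\<dots> \<le> (\<Sum>i. 1 / real ((i + 1) ^ 2))"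
    using inverse_squares_sums by (intro sum_le_suminf) (auto simp: sums_iff)
  also have "\<dots> = pi ^ 2 / 6"
    using inverse_squares_sums by (simp add: sums_iff)
  finally show ?thesis .
qed

text \<open>The errors of the first-order increments add up with weights \<open>1 / j\<close>, raising the
  power of \<open>harm m\<close> by one, while the second-order defects carry weights \<open>1 / j\<^sup>2\<close>, whose sum
  is bounded.\<close>

lemma abs_alt_binom_remainder_Suc_le:
  assumes "C \<ge> 0" and IH: "\<And>j. j \<ge> 1 \<Longrightarrow> \<bar>alt_binom_remainder n j\<bar> \<le> C * harm j ^ k"
  shows "\<bar>alt_binom_remainder (Suc n) m\<bar>
           \<le> C * harm m ^ Suc k + pi ^ 2 / 6 * (real (Suc n) ^ 2 / fact (Suc n)) * harm m ^ (n - 1)"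
proof -
  define B where "B = real (Suc n) ^ 2 / fact (Suc n) * harm m ^ (n - 1)"
  have term_le: "\<bar>alt_binom_remainder n j / real j
                   + power_tangent_defect (harm (j - 1)) (harm j) n / fact (Suc n)\<bar>
        \<le> C * harm m ^ k * (1 / real j) + B * (1 / real j ^ 2)"
    if "j \<in> {1..m}" for j
  proof -
    from that have j: "1 \<le> j" "j \<le> m" by auto
    have "\<bar>alt_binom_remainder n j\<bar> \<le> C * harm m ^ k"
      using IH[OF j(1)] assms(1) j(2)
      by (meson harm_mono harm_nonneg mult_left_mono order_trans power_mono)
    then have "\<bar>alt_binom_remainder n j / real j\<bar> \<le> C * harm m ^ k * (1 / real j)"
      by (simp add: abs_divide divide_right_mono del: of_nat_Suc)
    moreover have "0 \<le> power_tangent_defect (harm (j - 1)) (harm j) n / fact (Suc n)"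
      by (intro divide_nonneg_nonneg power_tangent_defect_nonneg harm_nonneg harm_mono) auto
    moreover have "power_tangent_defect (harm (j - 1)) (harm j) n / fact (Suc n) \<le> B * (1 / real j ^ 2)"
      using power_tangent_defect_harm_le[OF j, of n]
      by (simp add: B_def divide_right_mono field_simps del: of_nat_Suc)
    ultimately show ?thesis
      by linarith
  qed
  have "\<bar>alt_binom_remainder (Suc n) m\<bar>
      \<le> (\<Sum>j=1..m. C * harm m ^ k * (1 / real j) + B * (1 / real j ^ 2))"
    unfolding alt_binom_remainder_Suc_eq_sum by (rule order_trans[OF sum_abs sum_mono]) (rule term_le)
  also have "\<dots> = C * harm m ^ k * harm m + B * (\<Sum>j=1..m. 1 / real j ^ 2)"
    by (simp add: sum.distrib sum_distrib_left harm_def inverse_eq_divide)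
  also have "\<dots> \<le> C * harm m ^ k * harm m + B * (pi ^ 2 / 6)"
    using sum_inverse_squares_le[of m] by (intro add_left_mono mult_left_mono) (auto simp: B_def harm_nonneg)
  finally show ?thesis
    by (simp add: B_def mult_ac)
qed

lemma alt_binom_remainder_bound:
  assumes "n \<ge> 2"
  shows "\<exists>C\<ge>0. \<forall>m\<ge>1. \<bar>alt_binom_remainder n m\<bar> \<le> C * harm m ^ (n - 2)"
  using assms
proof (induction n rule: nat_induct_at_least)
  case base
  have "\<bar>alt_binom_remainder 2 m\<bar> \<le> pi ^ 2 / 6 * (real 2 ^ 2 / fact 2)" for m
    using abs_alt_binom_remainder_Suc_le[of 0 1 1 m] alt_binom_remainder_eq_0
    by (simp add: numeral_2_eq_2)
  then show ?case
    by (intro exI[of _ "pi ^ 2 / 6 * (real 2 ^ 2 / fact 2)"]) auto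
next
  case (Suc n)
  then obtain C where C: "C \<ge> 0" "\<And>m. m \<ge> 1 \<Longrightarrow> \<bar>alt_binom_remainder n m\<bar> \<le> C * harm m ^ (n - 2)"
    by blast
  define K where "K = pi ^ 2 / 6 * (real (Suc n) ^ 2 / fact (Suc n))"
  have "\<bar>alt_binom_remainder (Suc n) m\<bar> \<le> (C + K) * harm m ^ (Suc n - 2)" for m
  proof -
    have "Suc (n - 2) = Suc n - 2" "n - 1 = Suc n - 2"
      using Suc.hyps by auto
    then show ?thesis
      using abs_alt_binom_remainder_Suc_le[OF C, of m] by (simp add: K_def algebra_simps)
  qed
  moreover have "K \<ge> 0"
    by (simp add: K_def)
  ultimately show ?case
    using C by (intro exI[of _ "C + K"]) auto
qed

lemma abs_harm_minus_ln_le: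
  assumes "m \<ge> 1"
  shows "\<bar>harm m - ln (real m) - euler_mascheroni\<bar> \<le> 1 / real m"
proof -
  have m: "real m > 0"
    using assms by simp
  have "1 + 1 / real m = real (Suc m) / real m"
    using m by (simp add: field_simps)
  then have "ln (real (Suc m)) - ln (real m) = ln (1 + 1 / real m)"
    using m by (simp add: ln_divide_pos)
  moreover have "0 \<le> ln (1 + 1 / real m)" "ln (1 + 1 / real m) \<le> 1 / real m"
    using m by (auto intro: ln_add_one_self_le_self)
  moreover have "0 \<le> inverse (real (2 * (m + 1)))" "inverse (real (2 * m)) \<le> 1 / real m"
    using m by (simp_all add: field_simps)
  moreover note euler_mascheroni_bounds[OF assms]
  ultimately show ?thesis
    unfolding abs_le_iff atLeastAtMost_iff by linarith
qed

lemma ln_ge_1_of_ge_3: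
  assumes "m \<ge> 3"
  shows "1 \<le> ln (real m)"
proof -
  have "exp 1 \<le> real m"
    using assms exp_le by linarith
  then show ?thesis
    using assms by (subst ln_ge_iff) auto
qed

lemma harm_le_3_ln:
  assumes "m \<ge> 3"
  shows "harm m \<le> 3 * ln (real m)"
proof -
  have "1 / real m \<le> 1"
    using assms by simp
  then show ?thesis
    using abs_harm_minus_ln_le[of m] assms ln_ge_1_of_ge_3[OF assms] euler_mascheroni_less_13_over_22
    unfolding abs_le_iff by linarith
qed

lemma abs_harm_power_minus_power_le:
  assumes "m \<ge> 3"
  shows "\<bar>harm m ^ Suc (Suc k) - (ln (real m) + euler_mascheroni) ^ Suc (Suc k)\<bar>
           \<le> real (Suc (Suc k)) * 3 ^ Suc k * ln (real m) ^ k"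
proof -
  define L where "L = ln (real m)"
  have L: "1 \<le> L" "L \<le> real m"
    unfolding L_def using ln_ge_1_of_ge_3[OF assms] assms by (auto intro: less_imp_le ln_less_self)
  have "0 \<le> L + euler_mascheroni" "L + euler_mascheroni \<le> 3 * L"
    using L euler_mascheroni_pos euler_mascheroni_less_13_over_22 by auto
  then have "\<bar>harm m ^ Suc (Suc k) - (L + euler_mascheroni) ^ Suc (Suc k)\<bar>
      \<le> real (Suc (Suc k)) * \<bar>harm m - (L + euler_mascheroni)\<bar> * (3 * L) ^ Suc k"
    using abs_power_diff_le[of "harm m" "L + euler_mascheroni" "3 * L" "Suc (Suc k)"]
      harm_le_3_ln[OF assms] by (simp add: harm_nonneg L_def)
  also have "\<dots> \<le> real (Suc (Suc k)) * (1 / real m) * (3 * L) ^ Suc k"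
    using abs_harm_minus_ln_le[of m] assms L by (intro mult_right_mono mult_left_mono) (auto simp: L_def)
  also have "\<dots> = real (Suc (Suc k)) * 3 ^ Suc k * L ^ k * (L / real m)"
    by (simp add: power_mult_distrib)
  also have "\<dots> \<le> real (Suc (Suc k)) * 3 ^ Suc k * L ^ k"
    using L assms by (intro mult_left_le) auto
  finally show ?thesis
    unfolding L_def .
qed

lemma abs_shifted_ln_power_minus_linear_le:
  assumes "m \<ge> 3"
  shows "\<bar>(ln (real m) + euler_mascheroni) ^ Suc (Suc k) - ln (real m) ^ Suc (Suc k)
            - real (Suc (Suc k)) * euler_mascheroni * ln (real m) ^ Suc k\<bar>
           \<le> 2 * real (Suc (Suc k)) ^ 2 * 2 ^ k * ln (real m) ^ k"
proof -
  define L where "L = ln (real m)"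
  define \<gamma> where "\<gamma> = (euler_mascheroni :: real)"
  have L: "1 \<le> L"
    unfolding L_def using ln_ge_1_of_ge_3[OF assms] .
  have \<gamma>: "0 < \<gamma>" "\<gamma> < 1"
    unfolding \<gamma>_def using euler_mascheroni_pos euler_mascheroni_less_13_over_22 by auto
  have "\<bar>(L + \<gamma>) ^ Suc (Suc k) - L ^ Suc (Suc k) - real (Suc (Suc k)) * \<gamma> * L ^ Suc k\<bar>
      \<le> 2 * real (Suc (Suc k)) ^ 2 * \<gamma> ^ 2 * (L + \<gamma>) ^ k"
    using L \<gamma> by (intro abs_power_add_minus_linear_le) auto
  also have "\<dots> \<le> 2 * real (Suc (Suc k)) ^ 2 * 1 * (2 * L) ^ k"
    using L \<gamma> by (intro mult_left_mono mult_mono power_mono) (auto simp: power_le_one)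
  finally show ?thesis
    by (simp add: L_def \<gamma>_def power_mult_distrib mult_ac)
qed

lemma alt_binom_sum_expansion_bound:
  fixes k :: nat
  defines "N \<equiv> Suc (Suc k)"
  shows "\<exists>K. \<forall>m\<ge>3. \<bar>alt_binom_sum N m - (ln (real m) ^ N / fact N
            + euler_mascheroni * ln (real m) ^ Suc k / fact (Suc k))\<bar> \<le> K * ln (real m) ^ k"
proof -
  obtain C where "C \<ge> 0" and C: "\<And>m. m \<ge> 1 \<Longrightarrow> \<bar>alt_binom_remainder N m\<bar> \<le> C * harm m ^ k"
    using alt_binom_remainder_bound[of N] unfolding N_def by auto
  define K where "K = C * 3 ^ k + real N * 3 ^ Suc k + 2 * real N ^ 2 * 2 ^ k"
  have div_fact: "\<bar>x / fact N\<bar> \<le> \<bar>x\<bar>" for x :: real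
    using fact_ge_1[of N, where 'a=real]
    by (simp add: abs_divide divide_le_eq) (simp add: mult_le_cancel_left1 mult_left_mono[of 1])
  have "\<bar>alt_binom_sum N m - (ln (real m) ^ N / fact N
            + euler_mascheroni * ln (real m) ^ Suc k / fact (Suc k))\<bar> \<le> K * ln (real m) ^ k"
    if m: "m \<ge> 3" for m
  proof -
    define L where "L = ln (real m)"
    define v where "v = L + euler_mascheroni"
    define E1 where "E1 = harm m ^ N - v ^ N"
    define E2 where "E2 = v ^ N - L ^ N - real N * euler_mascheroni * L ^ Suc k"
    have "fact N = real N * fact (Suc k)"
      unfolding N_def by (simp add: fact_Suc)
    then have "alt_binom_sum N m - (L ^ N / fact N + euler_mascheroni * L ^ Suc k / fact (Suc k))
        = alt_binom_remainder N m + E1 / fact N + E2 / fact N"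
      unfolding alt_binom_remainder_def E1_def E2_def
      by (simp add: diff_divide_distrib add_divide_distrib N_def)
    moreover have "\<bar>alt_binom_remainder N m\<bar> \<le> C * 3 ^ k * L ^ k"
    proof -
      have "harm m ^ k \<le> (3 * L) ^ k"
        unfolding L_def using harm_le_3_ln[OF m] by (intro power_mono harm_nonneg)
      then show ?thesis
        using C[of m] m \<open>C \<ge> 0\<close> mult_left_mono[of "harm m ^ k" "(3 * L) ^ k" C]
        by (simp add: power_mult_distrib mult_ac)
    qed
    moreover have "\<bar>E1 / fact N\<bar> \<le> real N * 3 ^ Suc k * L ^ k"
      using div_fact[of E1] abs_harm_power_minus_power_le[OF m, of k]
      unfolding E1_def v_def L_def N_def by linarith
    moreover have "\<bar>E2 / fact N\<bar> \<le> 2 * real N ^ 2 * 2 ^ k * L ^ k"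
      using div_fact[of E2] abs_shifted_ln_power_minus_linear_le[OF m, of k]
      unfolding E2_def v_def L_def N_def by linarith
    moreover have "K * L ^ k = C * 3 ^ k * L ^ k + real N * 3 ^ Suc k * L ^ k
                                 + 2 * real N ^ 2 * 2 ^ k * L ^ k"
      by (simp add: K_def algebra_simps)
    ultimately show ?thesis
      unfolding L_def by linarith
  qed
  then show ?thesis
    by blast
qed

lemma alt_binom_sum_asymptotic_bound:
  assumes "n \<ge> 1"
  shows "\<exists>K. \<forall>m\<ge>3. \<bar>alt_binom_sum n m - (ln (real m) ^ n / fact n
            + euler_mascheroni * ln (real m) ^ (n - 1) / fact (n - 1))\<bar>
              \<le> K * ln (real m) powr (real n - 2)"
proof (cases "n = 1")
  case True
  have "\<bar>alt_binom_sum n m - (ln (real m) ^ n / fact n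
            + euler_mascheroni * ln (real m) ^ (n - 1) / fact (n - 1))\<bar>
          \<le> 1 * ln (real m) powr (real n - 2)" if m: "m \<ge> 3" for m
  proof -
    have L: "1 \<le> ln (real m)" "ln (real m) \<le> real m"
      using ln_ge_1_of_ge_3[OF m] m by (auto intro: less_imp_le ln_less_self)
    have "\<bar>harm m - ln (real m) - euler_mascheroni\<bar> \<le> 1 / real m"
      using abs_harm_minus_ln_le[of m] m by simp
    also have "\<dots> \<le> 1 / ln (real m)"
      using L m by (intro divide_left_mono) auto
    finally show ?thesis
      unfolding True alt_binom_sum_1 using L by (simp add: powr_neg_one algebra_simps)
  qed
  then show ?thesis
    by blast
next
  case False
  define k where "k = n - 2"
  have n: "n = Suc (Suc k)"
    using assms False unfolding k_def by simp
  obtain K where K: "\<And>m. m \<ge> 3 \<Longrightarrow> \<bar>alt_binom_sum n m - (ln (real m) ^ n / fact n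
            + euler_mascheroni * ln (real m) ^ Suc k / fact (Suc k))\<bar> \<le> K * ln (real m) ^ k"
    using alt_binom_sum_expansion_bound[of k] unfolding n by blast
  have "ln (real m) powr (real n - 2) = ln (real m) ^ k" if "m \<ge> 3" for m
    using ln_ge_1_of_ge_3[OF that] by (simp add: n powr_realpow)
  then show ?thesis
    using K by (intro exI[of _ K]) (simp add: n)
qed

theorem corollary1:
  fixes n :: nat
  assumes "n \<ge> 1"
  shows "(\<lambda>m::nat. (\<Sum>k=1..m. (-1) ^ (k - 1) * real (m choose k) / real k ^ n)
            - (ln (real m) ^ n / fact n
               + euler_mascheroni * ln (real m) ^ (n - 1) / fact (n - 1)))
         \<in> O(\<lambda>m::nat. ln (real m) powr (real n - 2))"
proof -
  obtain K where K: "\<forall>m\<ge>3. \<bar>alt_binom_sum n m - (ln (real m) ^ n / fact n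
            + euler_mascheroni * ln (real m) ^ (n - 1) / fact (n - 1))\<bar>
              \<le> K * ln (real m) powr (real n - 2)"
    using alt_binom_sum_asymptotic_bound[OF assms] by blast
  then have "eventually (\<lambda>m. norm (alt_binom_sum n m - (ln (real m) ^ n / fact n
            + euler_mascheroni * ln (real m) ^ (n - 1) / fact (n - 1)))
              \<le> K * norm (ln (real m) powr (real n - 2))) at_top"
    unfolding eventually_at_top_linorder by auto
  then show ?thesis
    unfolding alt_binom_sum_def[symmetric] by (rule bigoI)
qed

end
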